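(* Let $C,D$ be sets and let $m$ be a $(C\mathcal y,D\mathcal y)$-bicomodule. Then (1) $m$ is a left adjoint in $\mathbb C\mathbf{at}^\sharp$ if and only if $m$ is linear, i.e. $m\cong M\mathcal y$ for a set $M$; (2) $m$ is a right adjoint in $\mathbb C\mathbf{at}^\sharp$ if and only if $m$ is conjunctive, i.e. $m_a(1)\cong1$ for each $a\in C$. Moreover, the right adjoint of a linear bicomodule corresponding to the span $D\xleftarrow{f}M\xrightarrow{h}C$ is the conjunctive $(D\mathcal y,C\mathcal y)$-bicomodule $\sum_{b\in D}\mathcal y^{f^{-1}(b)}$ (corresponding to $\Pi_f\Delta_h$), and the left adjoint of a conjunctive bicomodule $\sum_{a\in C}\mathcal y^{m[a]}$ (each $m[a]$ a set over $D$) is the linear $(D\mathcal y,C\mathcal y)$-bicomodule $\sum_{b\in D}\sum_{a\in C}\sum_{x\in m[a]_b}\mathcal y$.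
   Context: $\mathbb C\mathbf{at}^\sharp$: the bicategory whose objects are comonoids in $(\mathbf{Poly},\mathcal y,\triangleleft)$ (small categories), 1-cells $(c,d)$-bicomodules (polynomials $m$ with compatible coassociative counital coactions $m\to c\triangleleft m$, $m\to m\triangleleft d$), 2-cells bicomodule maps, composition $\triangleleft_d$ (equalizer of $m\triangleleft n\rightrightarrows m\triangleleft d\triangleleft n$), and identity on $c$ the bicomodule $c$. Adjunctions are internal to this bicategory. $C\mathcal y$ is the discrete category on the set $C$. For a $(c,d)$-bicomodule $m$ and $a\in c(1)$, $m_a$ is the summand of $m$ over $a$ under $m\to c\triangleleft m\to c(1)$. A $(C\mathcal y,D\mathcal y)$-bicomodule with linear carrier $M\mathcal y$ is the same as a span $C\leftarrow M\to D$; for a conjunctive one, $m[a]$ is a set equipped with a map to $D$, and $m[a]_b$ its fiber over $b$. *)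

theory Defs
  imports Main "HOL-Library.FuncSet"
begin

text \<open>A (C y, D y)-bicomodule (C, D discrete), unfolded: a polynomial
  sum over positions i of y^(dir i); the left coaction is a map
  base : positions to C; the right coaction labels each direction of i by an
  element of D (lab i).\<close>

record ('i, 'e, 'c, 'd) bicomod =
  pos  :: "'i set"
  base :: "'i \<Rightarrow> 'c"
  dir  :: "'i \<Rightarrow> 'e set"
  lab  :: "'i \<Rightarrow> 'e \<Rightarrow> 'd"

definition wf_bicomod :: "'c set \<Rightarrow> 'd set \<Rightarrow> ('i, 'e, 'c, 'd) bicomod \<Rightarrow> bool" where
  "wf_bicomod C D m \<longleftrightarrow>
     (\<forall>i\<in>pos m. base m i \<in> C \<and> (\<forall>e\<in>dir m i. lab m i e \<in> D))"

definition idb :: "'c set \<Rightarrow> ('c, unit, 'c, 'c) bicomod" where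
  "idb C = \<lparr>pos = C, base = id, dir = (\<lambda>_. {()}), lab = (\<lambda>a _. a)\<rparr>"

text \<open>Composite m \<triangleleft>_D n (the equalizer, computed).\<close>
definition bcomp :: "('i, 'e, 'c, 'd) bicomod \<Rightarrow> ('j, 'f, 'd, 'x) bicomod
     \<Rightarrow> ('i \<times> ('e \<Rightarrow> 'j), 'e \<times> 'f, 'c, 'x) bicomod" where
  "bcomp m n = \<lparr>pos = {(i, g). i \<in> pos m \<and> g \<in> dir m i \<rightarrow>\<^sub>E pos n
                      \<and> (\<forall>e\<in>dir m i. base n (g e) = lab m i e)},
               base = (\<lambda>(i, g). base m i),
               dir = (\<lambda>(i, g). SIGMA e:dir m i. dir n (g e)),
               lab = (\<lambda>(i, g) (e, x). lab n (g e) x)\<rparr>"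

text \<open>Maps of bicomodules (2-cells): maps of polynomials (forward on positions,
  backward on directions) compatible with both coactions.\<close>
record ('i, 'j, 'f, 'e) bmap =
  onpos :: "'i \<Rightarrow> 'j"
  ondir :: "'i \<Rightarrow> 'f \<Rightarrow> 'e"

definition is_bmap :: "('i, 'e, 'c, 'd) bicomod \<Rightarrow> ('j, 'f, 'c, 'd) bicomod
     \<Rightarrow> ('i, 'j, 'f, 'e) bmap \<Rightarrow> bool" where
  "is_bmap m m' \<phi> \<longleftrightarrow>
     (\<forall>i\<in>pos m. onpos \<phi> i \<in> pos m' \<and> base m' (onpos \<phi> i) = base m i \<and>
        (\<forall>e'\<in>dir m' (onpos \<phi> i). ondir \<phi> i e' \<in> dir m i \<and>
             lab m i (ondir \<phi> i e') = lab m' (onpos \<phi> i) e'))"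

definition bmap_eq :: "('i, 'e, 'c, 'd) bicomod \<Rightarrow> ('j, 'f, 'c, 'd) bicomod
     \<Rightarrow> ('i, 'j, 'f, 'e) bmap \<Rightarrow> ('i, 'j, 'f, 'e) bmap \<Rightarrow> bool" where
  "bmap_eq m m' \<phi> \<psi> \<longleftrightarrow>
     (\<forall>i\<in>pos m. onpos \<phi> i = onpos \<psi> i \<and>
        (\<forall>e'\<in>dir m' (onpos \<phi> i). ondir \<phi> i e' = ondir \<psi> i e'))"

definition idmap :: "('i, 'i, 'e, 'e) bmap" where
  "idmap = \<lparr>onpos = id, ondir = (\<lambda>_ e. e)\<rparr>"

text \<open>Vertical composite: first \<phi>, then \<psi>.\<close>
definition vcomp :: "('i, 'j, 'f, 'e) bmap \<Rightarrow> ('j, 'k, 'g, 'f) bmap \<Rightarrow> ('i, 'k, 'g, 'e) bmap" where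
  "vcomp \<phi> \<psi> = \<lparr>onpos = onpos \<psi> \<circ> onpos \<phi>,
                  ondir = (\<lambda>i e. ondir \<phi> i (ondir \<psi> (onpos \<phi> i) e))\<rparr>"

text \<open>Whiskering: m \<triangleleft> \<alpha> : m\<triangleleft>p \<rightarrow> m\<triangleleft>q, and \<alpha> \<triangleleft> n : p\<triangleleft>n \<rightarrow> q\<triangleleft>n
  (the second takes the target q of \<alpha> as argument).\<close>
definition lwhisk :: "('i, 'e, 'c, 'd) bicomod \<Rightarrow> ('j, 'k, 'h, 'f) bmap
     \<Rightarrow> ('i \<times> ('e \<Rightarrow> 'j), 'i \<times> ('e \<Rightarrow> 'k), 'e \<times> 'h, 'e \<times> 'f) bmap" where
  "lwhisk m \<alpha> = \<lparr>onpos = (\<lambda>(i, g). (i, \<lambda>e\<in>dir m i. onpos \<alpha> (g e))),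
                 ondir = (\<lambda>(i, g) (e, y). (e, ondir \<alpha> (g e) y))\<rparr>"

definition rwhisk :: "('i, 'k, 'h, 'e) bmap \<Rightarrow> ('k, 'h, 'c, 'd) bicomod
     \<Rightarrow> ('i \<times> ('e \<Rightarrow> 'j), 'k \<times> ('h \<Rightarrow> 'j), 'h \<times> 'f, 'e \<times> 'f) bmap" where
  "rwhisk \<alpha> q = \<lparr>onpos = (\<lambda>(i, g). (onpos \<alpha> i, \<lambda>e'\<in>dir q (onpos \<alpha> i). g (ondir \<alpha> i e'))),
                 ondir = (\<lambda>(i, g) (e', y). (ondir \<alpha> i e', y))\<rparr>"

definition bassoc :: "('i, 'e, 'c, 'd) bicomod \<Rightarrow> ('j, 'f, 'd, 'x) bicomod
     \<Rightarrow> (('i \<times> ('e \<Rightarrow> 'j)) \<times> ('e \<times> 'f \<Rightarrow> 'k), 'i \<times> ('e \<Rightarrow> 'j \<times> ('f \<Rightarrow> 'k)),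
         'e \<times> 'f \<times> 'h, ('e \<times> 'f) \<times> 'h) bmap" where
  "bassoc m n = \<lparr>onpos = (\<lambda>((i, g), h). (i, \<lambda>e\<in>dir m i. (g e, \<lambda>y\<in>dir n (g e). h (e, y)))),
                 ondir = (\<lambda>_ (e, y, z). ((e, y), z))\<rparr>"

definition bassoc_inv :: "('i, 'e, 'c, 'd) bicomod \<Rightarrow> ('j, 'f, 'd, 'x) bicomod
     \<Rightarrow> ('i \<times> ('e \<Rightarrow> 'j \<times> ('f \<Rightarrow> 'k)), ('i \<times> ('e \<Rightarrow> 'j)) \<times> ('e \<times> 'f \<Rightarrow> 'k),
         ('e \<times> 'f) \<times> 'h, 'e \<times> 'f \<times> 'h) bmap" where
  "bassoc_inv m n = \<lparr>onpos = (\<lambda>(i, G). ((i, \<lambda>e\<in>dir m i. fst (G e)),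
                        \<lambda>q\<in>(SIGMA e:dir m i. dir n (fst (G e))). snd (G (fst q)) (snd q))),
                     ondir = (\<lambda>_ ((e, y), z). (e, y, z))\<rparr>"

definition runit_inv :: "('i, 'e, 'c, 'd) bicomod \<Rightarrow> ('i, 'i \<times> ('e \<Rightarrow> 'd), 'e \<times> unit, 'e) bmap" where
  "runit_inv m = \<lparr>onpos = (\<lambda>i. (i, \<lambda>e\<in>dir m i. lab m i e)), ondir = (\<lambda>_ (e, u). e)\<rparr>"

definition runit :: "('i \<times> ('e \<Rightarrow> 'd), 'i, 'e, 'e \<times> unit) bmap" where
  "runit = \<lparr>onpos = fst, ondir = (\<lambda>_ y. (y, ()))\<rparr>"

definition lunit :: "('c \<times> (unit \<Rightarrow> 'i), 'i, 'e, unit \<times> 'e) bmap" where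
  "lunit = \<lparr>onpos = (\<lambda>(a, g). g ()), ondir = (\<lambda>_ e. ((), e))\<rparr>"

definition lunit_inv :: "('i, 'e, 'c, 'd) bicomod \<Rightarrow> ('i, 'c \<times> (unit \<Rightarrow> 'i), unit \<times> 'e, 'e) bmap" where
  "lunit_inv n = \<lparr>onpos = (\<lambda>j. (base n j, \<lambda>u\<in>{()}. j)), ondir = (\<lambda>_ (u, y). y)\<rparr>"

text \<open>Internal adjunction m \<stileturn> n in Cat#, m a (C y, D y)-bicomodule
  (left adjoint), n a (D y, C y)-bicomodule (right adjoint):
  unit  id_D \<Rightarrow> n \<triangleleft> m, counit m \<triangleleft> n \<Rightarrow> id_C, plus the two triangle identities.\<close>
definition is_adjunction :: "'c set \<Rightarrow> 'd set \<Rightarrow> ('i, 'e, 'c, 'd) bicomod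
     \<Rightarrow> ('j, 'f, 'd, 'c) bicomod \<Rightarrow> bool" where
  "is_adjunction C D m n \<longleftrightarrow> wf_bicomod C D m \<and> wf_bicomod D C n \<and>
     (\<exists>\<eta> \<epsilon>. is_bmap (idb D) (bcomp n m) \<eta> \<and> is_bmap (bcomp m n) (idb C) \<epsilon> \<and>
        bmap_eq m m
          (vcomp (runit_inv m) (vcomp (lwhisk m \<eta>) (vcomp (bassoc_inv m n)
             (vcomp (rwhisk \<epsilon> (idb C)) lunit)))) idmap \<and>
        bmap_eq n n
          (vcomp (lunit_inv n) (vcomp (rwhisk \<eta> (bcomp n m)) (vcomp (bassoc n m)
             (vcomp (lwhisk n \<epsilon>) runit)))) idmap)"

text \<open>Linear: the carrier is M y (each position has exactly one direction).
  Conjunctive: m_a(1) = 1 for each a in C.\<close>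
definition linear_bicomod :: "('i, 'e, 'c, 'd) bicomod \<Rightarrow> bool" where
  "linear_bicomod m \<longleftrightarrow> (\<forall>i\<in>pos m. \<exists>!e. e \<in> dir m i)"

definition conjunctive_bicomod :: "'c set \<Rightarrow> ('i, 'e, 'c, 'd) bicomod \<Rightarrow> bool" where
  "conjunctive_bicomod C m \<longleftrightarrow> (\<forall>a\<in>C. \<exists>!i. i \<in> pos m \<and> base m i = a)"

text \<open>For a linear m, the span D <-f- M -h-> C with M = positions, f = label of
  the unique direction, h = base; its right adjoint sum_{b in D} y^(f^-1 b).\<close>
definition lin_radj :: "'d set \<Rightarrow> ('i, 'e, 'c, 'd) bicomod \<Rightarrow> ('d, 'i, 'd, 'c) bicomod" where
  "lin_radj D m = \<lparr>pos = D, base = id,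
     dir = (\<lambda>b. {i \<in> pos m. lab m i (THE e. e \<in> dir m i) = b}),
     lab = (\<lambda>b i. base m i)\<rparr>"

text \<open>For a conjunctive m, m[a] = directions of the unique position over a;
  left adjoint sum_{b in D} sum_{a in C} sum_{x in m[a]_b} y.\<close>
definition conj_pos :: "('i, 'e, 'c, 'd) bicomod \<Rightarrow> 'c \<Rightarrow> 'i" where
  "conj_pos m a = (THE i. i \<in> pos m \<and> base m i = a)"

definition conj_ladj :: "'c set \<Rightarrow> 'd set \<Rightarrow> ('i, 'e, 'c, 'd) bicomod
     \<Rightarrow> ('d \<times> 'c \<times> 'e, unit, 'd, 'c) bicomod" where
  "conj_ladj C D m = \<lparr>pos = {(b, a, x). b \<in> D \<and> a \<in> C \<and> x \<in> dir m (conj_pos m a)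
                               \<and> lab m (conj_pos m a) x = b},
     base = (\<lambda>(b, a, x). b), dir = (\<lambda>_. {()}), lab = (\<lambda>(b, a, x) _. a)\<rparr>"

end

theory Submission
  imports Defs
begin

text \<open>For an adjunction \<open>m \<stileturn> n\<close> between bicomodules over discrete categories,
  the left triangle composite on m passes through the identity bicomodule on \<open>C y\<close>,
  whose positions carry a single direction. Hence on directions it is constant at each
  position of m; being the identity, every position of m has at most one direction, and
  the counit provides one. Dually, the right triangle composite on the right adjoint sends
  each position j to the position the unit picks over \<open>base j\<close>, so positions over the
  same object coincide, and the unit provides one over each object. Conversely, for the
  explicit adjoints the unit and counit are the evident inclusion and evaluation maps, and
  the triangle identities are checked pointwise.\<close>

definition left_triangle ::
    "'c set \<Rightarrow> ('i, 'e, 'c, 'd) bicomod \<Rightarrow> ('j, 'f, 'd, 'c) bicomod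
     \<Rightarrow> ('d, 'j \<times> ('f \<Rightarrow> 'i), 'f \<times> 'e, unit) bmap
     \<Rightarrow> ('i \<times> ('e \<Rightarrow> 'j), 'c, unit, 'e \<times> 'f) bmap \<Rightarrow> ('i, 'i, 'e, 'e) bmap" where
  "left_triangle C m n \<eta> \<epsilon> =
     vcomp (runit_inv m) (vcomp (lwhisk m \<eta>) (vcomp (bassoc_inv m n)
       (vcomp (rwhisk \<epsilon> (idb C)) lunit)))"

definition right_triangle ::
    "('i, 'e, 'c, 'd) bicomod \<Rightarrow> ('j, 'f, 'd, 'c) bicomod
     \<Rightarrow> ('d, 'j \<times> ('f \<Rightarrow> 'i), 'f \<times> 'e, unit) bmap
     \<Rightarrow> ('i \<times> ('e \<Rightarrow> 'j), 'c, unit, 'e \<times> 'f) bmap \<Rightarrow> ('j, 'j, 'f, 'f) bmap" where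
  "right_triangle m n \<eta> \<epsilon> =
     vcomp (lunit_inv n) (vcomp (rwhisk \<eta> (bcomp n m)) (vcomp (bassoc n m)
       (vcomp (lwhisk n \<epsilon>) runit)))"

lemma is_adjunction_iff:
  "is_adjunction C D m n \<longleftrightarrow> wf_bicomod C D m \<and> wf_bicomod D C n \<and>
     (\<exists>\<eta> \<epsilon>. is_bmap (idb D) (bcomp n m) \<eta> \<and> is_bmap (bcomp m n) (idb C) \<epsilon> \<and>
        bmap_eq m m (left_triangle C m n \<eta> \<epsilon>) idmap \<and>
        bmap_eq n n (right_triangle m n \<eta> \<epsilon>) idmap)"
  unfolding is_adjunction_def left_triangle_def right_triangle_def ..

lemma bmap_eq_idmap_iff:
  "bmap_eq m m \<phi> idmap \<longleftrightarrow> (\<forall>i\<in>pos m. onpos \<phi> i = i \<and> (\<forall>e\<in>dir m i. ondir \<phi> i e = e))"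
  unfolding bmap_eq_def idmap_def by auto

lemma is_bmap_from_idb_iff:
  "is_bmap (idb D) p \<phi> \<longleftrightarrow>
     (\<forall>b\<in>D. onpos \<phi> b \<in> pos p \<and> base p (onpos \<phi> b) = b \<and>
        (\<forall>e\<in>dir p (onpos \<phi> b). lab p (onpos \<phi> b) e = b))"
  unfolding is_bmap_def idb_def by auto

lemma is_bmap_to_idb_iff:
  "is_bmap p (idb C) \<phi> \<longleftrightarrow>
     (\<forall>i\<in>pos p. base p i \<in> C \<and> onpos \<phi> i = base p i \<and>
        ondir \<phi> i () \<in> dir p i \<and> lab p i (ondir \<phi> i ()) = base p i)"
  unfolding is_bmap_def idb_def by auto

text \<open>The position of \<open>m \<triangleleft> n\<close> at which the left triangle composite applies the counit.\<close>
definition unit_lift :: "('i, 'e, 'c, 'd) bicomod \<Rightarrow> ('d, 'j \<times> ('f \<Rightarrow> 'i), 'f \<times> 'e, unit) bmap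
     \<Rightarrow> 'i \<Rightarrow> 'i \<times> ('e \<Rightarrow> 'j)" where
  "unit_lift m \<eta> i = (i, \<lambda>e\<in>dir m i. fst (onpos \<eta> (lab m i e)))"

lemma unit_lift_in_pos_bcomp:
  assumes "wf_bicomod C D m" and "is_bmap (idb D) (bcomp n m) \<eta>" and "i \<in> pos m"
  shows "unit_lift m \<eta> i \<in> pos (bcomp m n)"
proof -
  have "fst (onpos \<eta> (lab m i e)) \<in> pos n \<and> base n (fst (onpos \<eta> (lab m i e))) = lab m i e"
    if "e \<in> dir m i" for e
  proof -
    have "lab m i e \<in> D"
      using assms(1,3) that unfolding wf_bicomod_def by blast
    then show ?thesis
      using assms(2) unfolding is_bmap_from_idb_iff by (auto simp: bcomp_def split_beta)
  qed
  then show ?thesis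
    using assms(3) unfolding unit_lift_def bcomp_def by auto
qed

lemma onpos_left_triangle:
  assumes "ondir \<epsilon> (unit_lift m \<eta> i) () = (e, y)" and "e \<in> dir m i"
    and "y \<in> dir n (fst (onpos \<eta> (lab m i e)))"
  shows "onpos (left_triangle C m n \<eta> \<epsilon>) i = snd (onpos \<eta> (lab m i e)) y"
  using assms by (simp add: left_triangle_def unit_lift_def vcomp_def runit_inv_def lwhisk_def
      bassoc_inv_def rwhisk_def lunit_def idb_def split_beta cong: restrict_cong)

lemma ondir_left_triangle:
  "ondir (left_triangle C m n \<eta> \<epsilon>) i e' = fst (ondir \<epsilon> (unit_lift m \<eta> i) ())"
  by (simp add: left_triangle_def unit_lift_def vcomp_def runit_inv_def lwhisk_def bassoc_inv_def
      rwhisk_def lunit_def idb_def split_beta cong: restrict_cong)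

lemma onpos_right_triangle:
  "onpos (right_triangle m n \<eta> \<epsilon>) j = fst (onpos \<eta> (base n j))"
  by (simp add: right_triangle_def vcomp_def lunit_inv_def rwhisk_def bassoc_def lwhisk_def
      runit_def split_beta)

lemma ondir_right_triangle:
  assumes "onpos \<eta> (base n j) = (k, h)" and "y \<in> dir n k"
  shows "ondir (right_triangle m n \<eta> \<epsilon>) j y = snd (ondir \<epsilon> (h y, \<lambda>x\<in>dir m (h y). j) ())"
  using assms by (simp add: right_triangle_def vcomp_def lunit_inv_def rwhisk_def bassoc_def
      lwhisk_def runit_def bcomp_def split_beta cong: restrict_cong)

lemma linear_if_left_adjoint:
  assumes "is_adjunction C D m n"
  shows "linear_bicomod m"
proof -
  obtain \<eta> \<epsilon> where wf: "wf_bicomod C D m" and unit: "is_bmap (idb D) (bcomp n m) \<eta>"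
    and counit: "is_bmap (bcomp m n) (idb C) \<epsilon>"
    and triangle: "\<forall>i\<in>pos m. \<forall>e\<in>dir m i. fst (ondir \<epsilon> (unit_lift m \<eta> i) ()) = e"
    using assms unfolding is_adjunction_iff bmap_eq_idmap_iff ondir_left_triangle by blast
  show ?thesis
    unfolding linear_bicomod_def
  proof
    fix i assume i: "i \<in> pos m"
    have "ondir \<epsilon> (unit_lift m \<eta> i) () \<in> dir (bcomp m n) (unit_lift m \<eta> i)"
      using counit unit_lift_in_pos_bcomp[OF wf unit i] unfolding is_bmap_to_idb_iff by blast
    then have "fst (ondir \<epsilon> (unit_lift m \<eta> i) ()) \<in> dir m i"
      by (auto simp: bcomp_def unit_lift_def)
    then show "\<exists>!e. e \<in> dir m i"
      using triangle i by metis
  qed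
qed

lemma conjunctive_if_right_adjoint:
  assumes "is_adjunction D C n m"
  shows "conjunctive_bicomod C m"
proof -
  obtain \<eta> where unit: "is_bmap (idb C) (bcomp m n) \<eta>"
    and triangle: "\<forall>i\<in>pos m. fst (onpos \<eta> (base m i)) = i"
    using assms unfolding is_adjunction_iff bmap_eq_idmap_iff onpos_right_triangle by blast
  have "fst (onpos \<eta> a) \<in> pos m \<and> base m (fst (onpos \<eta> a)) = a" if "a \<in> C" for a
    using unit that unfolding is_bmap_from_idb_iff by (auto simp: bcomp_def split_beta)
  then show ?thesis
    unfolding conjunctive_bicomod_def using triangle by metis
qed

lemma linear_dir_eq:
  assumes "linear_bicomod m" and "i \<in> pos m"
  shows "dir m i = {THE e. e \<in> dir m i}"
proof -
  have "\<exists>!e. e \<in> dir m i"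
    using assms unfolding linear_bicomod_def by blast
  then show ?thesis
    by (auto intro: the1_equality[symmetric] theI')
qed

lemma left_adjoint_if_linear:
  fixes m :: "('i, 'e, 'c, 'd) bicomod"
  assumes wf: "wf_bicomod C D m" and lin: "linear_bicomod m"
  shows "is_adjunction C D m (lin_radj D m)"
proof -
  define n where "n = lin_radj D m"
  define the_dir where "the_dir i = (THE e. e \<in> dir m i)" for i
  have dir_m: "dir m i = {the_dir i}" if "i \<in> pos m" for i
    unfolding the_dir_def using linear_dir_eq[OF lin that] .
  have pos_n: "pos n = D" and base_n: "base n = id" and lab_n: "lab n b k = base m k"
    and dir_n: "dir n b = {k \<in> pos m. lab m k (the_dir k) = b}" for b k
    unfolding n_def lin_radj_def the_dir_def by auto
  define \<eta> :: "('d, 'd \<times> ('i \<Rightarrow> 'i), 'i \<times> 'e, unit) bmap" where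
    "\<eta> = \<lparr>onpos = (\<lambda>b. (b, \<lambda>k\<in>dir n b. k)), ondir = (\<lambda>_ _. ())\<rparr>"
  define \<epsilon> :: "('i \<times> ('e \<Rightarrow> 'd), 'c, unit, 'e \<times> 'i) bmap" where
    "\<epsilon> = \<lparr>onpos = (\<lambda>(i, h). base m i), ondir = (\<lambda>(i, h) u. (the_dir i, i))\<rparr>"
  have wf_n: "wf_bicomod D C n"
    using wf unfolding wf_bicomod_def pos_n dir_n lab_n base_n by auto
  have unit: "is_bmap (idb D) (bcomp n m) \<eta>"
    unfolding is_bmap_from_idb_iff by (auto simp: \<eta>_def bcomp_def pos_n base_n lab_n dir_n dir_m)
  have counit: "is_bmap (bcomp m n) (idb C) \<epsilon>"
    using wf unfolding is_bmap_to_idb_iff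
    by (auto simp: \<epsilon>_def bcomp_def wf_bicomod_def pos_n base_n lab_n dir_n dir_m)
  have left: "bmap_eq m m (left_triangle C m n \<eta> \<epsilon>) idmap"
    unfolding bmap_eq_idmap_iff
  proof (intro ballI conjI)
    fix i assume i: "i \<in> pos m"
    have "ondir \<epsilon> (unit_lift m \<eta> i) () = (the_dir i, i)"
      by (simp add: \<epsilon>_def unit_lift_def)
    then show "onpos (left_triangle C m n \<eta> \<epsilon>) i = i"
      using i by (subst onpos_left_triangle) (auto simp: \<eta>_def dir_n dir_m)
    show "ondir (left_triangle C m n \<eta> \<epsilon>) i e = e" if "e \<in> dir m i" for e
      using that i dir_m by (auto simp: ondir_left_triangle \<epsilon>_def unit_lift_def)
  qed
  have right: "bmap_eq n n (right_triangle m n \<eta> \<epsilon>) idmap"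
    unfolding bmap_eq_idmap_iff
    by (auto simp: onpos_right_triangle ondir_right_triangle \<eta>_def \<epsilon>_def base_n)
  show ?thesis
    using wf wf_n unit counit left right unfolding is_adjunction_iff n_def by blast
qed

lemma conj_pos_over:
  assumes "conjunctive_bicomod C m" and "a \<in> C"
  shows "conj_pos m a \<in> pos m \<and> base m (conj_pos m a) = a"
proof -
  have "\<exists>!i. i \<in> pos m \<and> base m i = a"
    using assms unfolding conjunctive_bicomod_def by blast
  then show ?thesis
    unfolding conj_pos_def by (rule theI')
qed

lemma conj_pos_base:
  assumes "conjunctive_bicomod C m" and "wf_bicomod C D m" and "i \<in> pos m"
  shows "conj_pos m (base m i) = i"
proof -
  have "base m i \<in> C"
    using assms(2,3) unfolding wf_bicomod_def by blast
  then have "\<exists>!j. j \<in> pos m \<and> base m j = base m i"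
    using assms(1) unfolding conjunctive_bicomod_def by blast
  then show ?thesis
    unfolding conj_pos_def using assms(3) by (auto intro: the1_equality)
qed

lemma right_adjoint_if_conjunctive:
  fixes m :: "('i, 'e, 'c, 'd) bicomod"
  assumes wf: "wf_bicomod C D m" and cj: "conjunctive_bicomod C m"
  shows "is_adjunction D C (conj_ladj C D m) m"
proof -
  define cp where "cp = conj_pos m"
  define L where "L = conj_ladj C D m"
  have cp: "cp a \<in> pos m" "base m (cp a) = a" if "a \<in> C" for a
    using conj_pos_over[OF cj that] unfolding cp_def by auto
  have cp_base: "cp (base m i) = i" if "i \<in> pos m" for i
    using conj_pos_base[OF cj wf that] unfolding cp_def .
  have pos_L: "pos L = {(b, a, x). b \<in> D \<and> a \<in> C \<and> x \<in> dir m (cp a) \<and> lab m (cp a) x = b}"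
    and base_L: "base L = (\<lambda>(b, a, x). b)" and dir_L: "dir L = (\<lambda>_. {()})"
    and lab_L: "lab L = (\<lambda>(b, a, x) _. a)"
    unfolding L_def conj_ladj_def cp_def by auto
  define \<eta> :: "('c, 'i \<times> ('e \<Rightarrow> 'd \<times> 'c \<times> 'e), 'e \<times> unit, unit) bmap" where
    "\<eta> = \<lparr>onpos = (\<lambda>a. (cp a, \<lambda>y\<in>dir m (cp a). (lab m (cp a) y, a, y))), ondir = (\<lambda>_ _. ())\<rparr>"
  define \<epsilon> :: "(('d \<times> 'c \<times> 'e) \<times> (unit \<Rightarrow> 'i), 'd, unit, unit \<times> 'e) bmap" where
    "\<epsilon> = \<lparr>onpos = (\<lambda>((b, a, x), h). b), ondir = (\<lambda>((b, a, x), h) u. ((), x))\<rparr>"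
  have wf_L: "wf_bicomod D C L"
    unfolding wf_bicomod_def pos_L base_L dir_L lab_L by auto
  have unit: "is_bmap (idb C) (bcomp m L) \<eta>"
    using wf unfolding is_bmap_from_idb_iff
    by (auto simp: \<eta>_def bcomp_def wf_bicomod_def pos_L base_L dir_L lab_L cp)
  have counit: "is_bmap (bcomp L m) (idb D) \<epsilon>"
    unfolding is_bmap_to_idb_iff
    by (auto simp: \<epsilon>_def bcomp_def pos_L base_L dir_L lab_L cp_base)
  have left: "bmap_eq L L (left_triangle D L m \<eta> \<epsilon>) idmap"
    unfolding bmap_eq_idmap_iff
    by (auto simp: onpos_left_triangle ondir_left_triangle unit_lift_def \<eta>_def \<epsilon>_def
        pos_L base_L dir_L lab_L cp)
  have right: "bmap_eq m m (right_triangle L m \<eta> \<epsilon>) idmap"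
    unfolding bmap_eq_idmap_iff
    by (auto simp: onpos_right_triangle ondir_right_triangle \<eta>_def \<epsilon>_def cp_base)
  show ?thesis
    using wf wf_L unit counit left right unfolding is_adjunction_iff L_def by blast
qed

theorem proposition2p39:
  fixes C :: "'c set" and D :: "'d set" and m :: "('i, 'e, 'c, 'd) bicomod"
  assumes "wf_bicomod C D m"
  shows "((\<forall>n :: ('j, 'f, 'd, 'c) bicomod. is_adjunction C D m n \<longrightarrow> linear_bicomod m)
          \<and> (linear_bicomod m \<longrightarrow> is_adjunction C D m (lin_radj D m)))
       \<and> ((\<forall>n :: ('k, 'g, 'd, 'c) bicomod. is_adjunction D C n m \<longrightarrow> conjunctive_bicomod C m)
          \<and> (conjunctive_bicomod C m \<longrightarrow> is_adjunction D C (conj_ladj C D m) m))"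
  using assms linear_if_left_adjoint left_adjoint_if_linear
    conjunctive_if_right_adjoint right_adjoint_if_conjunctive by blast

end
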